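(* Let $p,q\in(0,1/2)$ and let $S_1(x)=px$, $S_2(x)=qx$, $S_3(x)=px+1-p$, $S_4(x)=qx+1-q$. Let $K$ be the attractor of $\{S_1,S_2,S_3,S_4\}$ and $A=S_3(K)\cup S_4(K)$. Suppose that for all $m,n\in\mathbb N$, $S_1^m(A)\cap S_2^n(A)=\varnothing$. Then (i) $K=\{0\}\cup\bigcup_{m,n=0}^{\infty}S_1^mS_2^n(A)$, where the sets $S_1^mS_2^n(A)$, $(m,n)\in(\mathbb N\cup\{0\})^2$, are pairwise disjoint (and do not contain $0$); (ii) for any $m,n\in\mathbb N\cup\{0\}$, $S_1^m(K)\cap S_2^n(K)=S_1^mS_2^n(K)$.
   Context: The attractor of a finite system of contractions $\{S_1,\dots,S_m\}$ of $\mathbb R$ is the unique nonempty compact set $K$ with $K=\bigcup_i S_i(K)$. *)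

theory Defs
  imports "HOL-Analysis.Analysis"
begin

text \<open>For a finite family of contractions such a set is unique (Hutchinson).\<close>
definition is_attractor :: "(real \<Rightarrow> real) set \<Rightarrow> real set \<Rightarrow> bool" where
  "is_attractor F K \<longleftrightarrow> K \<noteq> {} \<and> compact K \<and> K = (\<Union>f\<in>F. f ` K)"

end

(* Every nonzero point of K \<subseteq> [0,1] lies in A or is p*y or q*y for a larger point y of K,
   so it has the form p^m q^n a with a \<in> A, while 0 \<in> K as the limit of p^m x.
   Since A \<subseteq> (1/2,1] and p, q < 1/2, cancelling common powers turns a coincidence
   p^m q^n a = p^m' q^n' a' either into a = (nontrivial product) * a', impossible by size,
   or into p^i a = q^j a' with i, j \<ge> 1, excluded by hypothesis.  This uniqueness of the
   representation gives the disjointness in (i), and comparing the representations of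
   x = p^m y = q^n z gives (ii). *)

theory Submission
  imports Defs
begin

lemma mult_powers_le_max:
  fixes p q :: real
  assumes "0 \<le> p" "p \<le> 1" "0 \<le> q" "q \<le> 1" "m + n \<noteq> 0"
  shows "p ^ m * q ^ n \<le> max p q"
proof -
  have "p ^ m * q ^ n \<le> max p q ^ m * max p q ^ n"
    using assms by (intro mult_mono power_mono) auto
  also have "\<dots> = max p q ^ (m + n)" by (simp add: power_add)
  also have "\<dots> \<le> max p q ^ 1"
    using assms by (intro power_decreasing) auto
  finally show ?thesis by simp
qed

lemma attractor_subset_interval:
  fixes a b :: real
  assumes "is_attractor F K"
    and mono: "\<And>f. f \<in> F \<Longrightarrow> mono f"
    and "\<And>f x. f \<in> F \<Longrightarrow> b < x \<Longrightarrow> f x < x"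
    and "\<And>f x. f \<in> F \<Longrightarrow> x < a \<Longrightarrow> x < f x"
  shows "K \<subseteq> {a..b}"
proof -
  have K: "K \<noteq> {}" "compact K" "K = (\<Union>f\<in>F. f ` K)"
    using assms(1) unfolding is_attractor_def by auto
  obtain M where M: "M \<in> K" "\<And>x. x \<in> K \<Longrightarrow> x \<le> M"
    using compact_attains_sup[OF K(2,1)] by blast
  then obtain f y where "f \<in> F" "y \<in> K" "M = f y" using K(3) by blast
  then have "M \<le> f M" using mono M(2) by (auto dest: monoD)
  then have "M \<le> b" using assms(3)[OF \<open>f \<in> F\<close>, of M] by fastforce
  obtain N where N: "N \<in> K" "\<And>x. x \<in> K \<Longrightarrow> N \<le> x"
    using compact_attains_inf[OF K(2,1)] by blast
  then obtain g z where "g \<in> F" "z \<in> K" "N = g z" using K(3) by blast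
  then have "g N \<le> N" using mono N(2) by (auto dest: monoD)
  then have "a \<le> N" using assms(4)[OF \<open>g \<in> F\<close>, of N] by fastforce
  show ?thesis using M(2) N(2) \<open>M \<le> b\<close> \<open>a \<le> N\<close> by fastforce
qed

lemma zero_mem_closed_if_scaling_invariant:
  fixes K :: "'a::real_normed_vector set"
  assumes "closed K" "K \<noteq> {}" "\<bar>t\<bar> < 1" "\<And>x. x \<in> K \<Longrightarrow> t *\<^sub>R x \<in> K"
  shows "0 \<in> K"
proof -
  obtain x where "x \<in> K" using assms(2) by blast
  have "(t ^ n) *\<^sub>R x \<in> K" for n
    by (induction n) (use \<open>x \<in> K\<close> assms(4) in \<open>auto simp flip: scaleR_scaleR\<close>)
  moreover have "(\<lambda>n. (t ^ n) *\<^sub>R x) \<longlonglongrightarrow> 0 *\<^sub>R x"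
    using assms(3) by (intro tendsto_scaleR LIMSEQ_power_zero tendsto_const) simp
  ultimately show ?thesis
    using closed_sequentially[OF assms(1)] by fastforce
qed

lemma mem_scaled_copies_if_nonzero:
  fixes p q x :: real
  assumes p: "0 < p" "p < 1" and q: "0 < q" "q < 1" and K: "K \<subseteq> {0..1}"
    and split: "\<And>x. x \<in> K \<Longrightarrow> x \<in> A \<or> (\<exists>y\<in>K. x = p * y \<or> x = q * y)"
    and "x \<in> K" "x \<noteq> 0"
  shows "\<exists>m n a. a \<in> A \<and> x = p ^ m * (q ^ n * a)"
proof -
  define r where "r = max p q"
  \<comment> \<open>Each step back to a preimage y = x/p or x/q multiplies x by at least 1/r.\<close>
  have "\<exists>m n a. a \<in> A \<and> x = p ^ m * (q ^ n * a)" if "x \<in> K" "r ^ k < x" for k x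
    using that
  proof (induction k arbitrary: x)
    case 0
    then show ?case using K by fastforce
  next
    case (Suc k)
    consider "x \<in> A" | (p_image) y where "y \<in> K" "x = p * y" | (q_image) y where "y \<in> K" "x = q * y"
      using split[OF Suc.prems(1)] by blast
    then show ?case
    proof cases
      case 1
      then have "x = p ^ 0 * (q ^ 0 * x)" by simp
      with 1 show ?thesis by blast
    next
      case (p_image y)
      have "p * r ^ k \<le> r * r ^ k" using p q by (intro mult_right_mono) (auto simp: r_def)
      then have "p * r ^ k < p * y" using Suc.prems(2) p_image(2) by simp
      then obtain m n a where "a \<in> A" "y = p ^ m * (q ^ n * a)"
        using Suc.IH[OF p_image(1)] \<open>0 < p\<close> by auto
      then have "x = p ^ Suc m * (q ^ n * a)" using p_image(2) by simp
      with \<open>a \<in> A\<close> show ?thesis by blast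
    next
      case (q_image y)
      have "q * r ^ k \<le> r * r ^ k" using p q by (intro mult_right_mono) (auto simp: r_def)
      then have "q * r ^ k < q * y" using Suc.prems(2) q_image(2) by simp
      then obtain m n a where "a \<in> A" "y = p ^ m * (q ^ n * a)"
        using Suc.IH[OF q_image(1)] \<open>0 < q\<close> by auto
      then have "x = p ^ m * (q ^ Suc n * a)" using q_image(2) by (simp add: ac_simps)
      with \<open>a \<in> A\<close> show ?thesis by blast
    qed
  qed
  moreover obtain k where "r ^ k < x"
    using real_arch_pow_inv[of x r] assms(7,8) K p q by (force simp: r_def)
  ultimately show ?thesis using assms(7) by blast
qed

locale separated_scales =
  fixes p q :: real and A :: "real set"
  assumes p: "0 < p" "p < 1/2" and q: "0 < q" "q < 1/2"
    and A: "A \<subseteq> {1/2<..1}"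
    and separated:
      "\<And>m n a a'. 1 \<le> m \<Longrightarrow> 1 \<le> n \<Longrightarrow> a \<in> A \<Longrightarrow> a' \<in> A \<Longrightarrow> p ^ m * a \<noteq> q ^ n * a'"
begin

lemma unscaled_eq_scaled_imp:
  assumes "a \<in> A" "a' \<in> A" "a = p ^ m * (q ^ n * a')"
  shows "m = 0 \<and> n = 0"
proof (rule ccontr)
  assume "\<not> (m = 0 \<and> n = 0)"
  then have "p ^ m * q ^ n < 1/2"
    using mult_powers_le_max[of p q m n] p q by auto
  moreover have "a' \<le> 1" "1/2 < a" using A assms(1,2) by auto
  moreover have "p ^ m * q ^ n * a' \<le> p ^ m * q ^ n"
    using \<open>a' \<le> 1\<close> p q by (intro mult_left_le) auto
  ultimately have "p ^ m * q ^ n * a' < 1/2" by linarith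
  then show False using assms(3) \<open>1/2 < a\<close> by (simp add: mult.assoc)
qed

lemma reduced_scaled_eq_imp:
  assumes "m = 0 \<or> m' = 0" "n = 0 \<or> n' = 0" "a \<in> A" "a' \<in> A"
    and eq: "p ^ m * (q ^ n * a) = p ^ m' * (q ^ n' * a')"
  shows "m = m' \<and> n = n'"
proof -
  have "m = 0 \<and> n = 0 \<or> m' = 0 \<and> n' = 0"
  proof (rule ccontr)
    assume "\<not> ?thesis"
    then consider "m = 0" "n' = 0" "1 \<le> m'" "1 \<le> n" | "m' = 0" "n = 0" "1 \<le> m" "1 \<le> n'"
      using assms(1,2) by force
    then show False
    proof cases
      case 1
      then show False using separated[of m' n a' a] eq assms(3,4) by simp
    next
      case 2
      then show False using separated[of m n' a a'] eq assms(3,4) by simp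
    qed
  qed
  then show ?thesis
  proof
    assume "m = 0 \<and> n = 0"
    then have "a = p ^ m' * (q ^ n' * a')" using eq by simp
    from unscaled_eq_scaled_imp[OF assms(3,4) this] \<open>m = 0 \<and> n = 0\<close> show ?thesis by simp
  next
    assume "m' = 0 \<and> n' = 0"
    then have "a' = p ^ m * (q ^ n * a)" using eq by simp
    from unscaled_eq_scaled_imp[OF assms(4,3) this] \<open>m' = 0 \<and> n' = 0\<close> show ?thesis by simp
  qed
qed

lemma scaled_copies_injective:
  assumes "a \<in> A" "a' \<in> A" "p ^ m * (q ^ n * a) = p ^ m' * (q ^ n' * a')"
  shows "m = m' \<and> n = n'"
proof -
  define k l where "k = min m m'" and "l = min n n'"
  have factor_out: "c ^ i * (d ^ j * x) = c ^ k * d ^ l * (c ^ (i - k) * (d ^ (j - l) * x))"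
    if "k \<le> i" "l \<le> j" for c d x :: real and i j
    using that by (simp add: mult_ac flip: power_add)
  have "p ^ k * q ^ l * (p ^ (m - k) * (q ^ (n - l) * a))
      = p ^ k * q ^ l * (p ^ (m' - k) * (q ^ (n' - l) * a'))"
    using assms(3) factor_out[of m n] factor_out[of m' n'] unfolding k_def l_def by simp
  then have "p ^ (m - k) * (q ^ (n - l) * a) = p ^ (m' - k) * (q ^ (n' - l) * a')"
    using p q by simp
  moreover have "m - k = 0 \<or> m' - k = 0" "n - l = 0 \<or> n' - l = 0"
    unfolding k_def l_def by auto
  ultimately have "m - k = m' - k \<and> n - l = n' - l"
    using reduced_scaled_eq_imp assms(1,2) by blast
  then show ?thesis unfolding k_def l_def by auto
qed

end

locale pq_attractor =
  fixes p q :: real and K :: "real set"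
  assumes p: "0 < p" "p < 1/2" and q: "0 < q" "q < 1/2"
    and attractor: "is_attractor {\<lambda>x. p * x, \<lambda>x. q * x, \<lambda>x. p * x + 1 - p, \<lambda>x. q * x + 1 - q} K"
begin

definition A :: "real set" where
  "A = (\<lambda>x. p * x + 1 - p) ` K \<union> (\<lambda>x. q * x + 1 - q) ` K"

lemma mem_K_iff: "x \<in> K \<longleftrightarrow> x \<in> A \<or> (\<exists>y\<in>K. x = p * y \<or> x = q * y)"
proof -
  have "K = (\<lambda>x. p * x) ` K \<union> (\<lambda>x. q * x) ` K \<union> A"
    using attractor unfolding is_attractor_def A_def by auto
  then show ?thesis by blast
qed

lemma K_subset_unit_interval: "K \<subseteq> {0..1}"
proof (rule attractor_subset_interval[OF attractor])
  fix f x
  assume "f \<in> {\<lambda>x. p * x, \<lambda>x. q * x, \<lambda>x. p * x + 1 - p, \<lambda>x. q * x + 1 - q}"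
  then have "f = (\<lambda>x. p * x + 0) \<or> f = (\<lambda>x. q * x + 0)
      \<or> f = (\<lambda>x. p * x + (1 - p)) \<or> f = (\<lambda>x. q * x + (1 - q))"
    by (auto simp: algebra_simps)
  then obtain t c where "t = p \<or> t = q" and f: "f = (\<lambda>x. t * x + c)" and "c = 0 \<or> c = 1 - t"
    by blast
  then have t: "0 < t" "t < 1" and c: "0 \<le> c" "c \<le> 1 - t" using p q by auto
  show "mono f" using t unfolding f by (auto intro!: monoI)
  show "f x < x" if "1 < x"
  proof -
    have "(1 - t) * 1 < (1 - t) * x" using t that by (intro mult_strict_left_mono) auto
    then show ?thesis using c unfolding f by (simp add: algebra_simps)
  qed
  show "x < f x" if "x < 0"
  proof -
    have "(1 - t) * x < (1 - t) * 0" using t that by (intro mult_strict_left_mono) auto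
    then show ?thesis using c unfolding f by (simp add: algebra_simps)
  qed
qed

lemma scaled_mem_K:
  assumes "x \<in> K"
  shows "p ^ m * (q ^ n * x) \<in> K"
proof -
  have scale: "p * y \<in> K" "q * y \<in> K" if "y \<in> K" for y
    using that mem_K_iff by blast+
  have "q ^ n * x \<in> K"
    by (induction n) (use assms scale in \<open>simp_all add: mult.assoc\<close>)
  then show ?thesis
    by (induction m) (use scale in \<open>simp_all add: mult.assoc\<close>)
qed

lemma zero_mem_K: "0 \<in> K"
  using attractor scaled_mem_K[of _ 1 0] p
  by (intro zero_mem_closed_if_scaling_invariant[of K p])
     (auto simp: is_attractor_def compact_imp_closed)

lemma A_subset_K: "A \<subseteq> K"
  using mem_K_iff by blast

lemma A_subset: "A \<subseteq> {1/2<..1}"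
proof
  fix a assume "a \<in> A"
  then obtain t y where "y \<in> K" "t = p \<or> t = q" "a = t * y + 1 - t"
    unfolding A_def by blast
  moreover have "0 < t" "t < 1/2" using \<open>t = p \<or> t = q\<close> p q by auto
  moreover have "0 \<le> t * y" "t * y \<le> t"
    using K_subset_unit_interval \<open>y \<in> K\<close> \<open>0 < t\<close> by (auto simp: mult_left_le)
  ultimately show "a \<in> {1/2<..1}" by auto
qed

lemma mem_K_iff_scaled_copies:
  "x \<in> K \<longleftrightarrow> x = 0 \<or> (\<exists>m n a. a \<in> A \<and> x = p ^ m * (q ^ n * a))"
proof
  assume "x \<in> K"
  moreover have "p < 1" "q < 1" using p q by auto
  ultimately show "x = 0 \<or> (\<exists>m n a. a \<in> A \<and> x = p ^ m * (q ^ n * a))"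
    using mem_scaled_copies_if_nonzero[OF p(1) _ q(1) _ K_subset_unit_interval mem_K_iff[THEN iffD1]]
    by blast
next
  assume "x = 0 \<or> (\<exists>m n a. a \<in> A \<and> x = p ^ m * (q ^ n * a))"
  then show "x \<in> K" using zero_mem_K scaled_mem_K A_subset_K by blast
qed

lemma K_eq_scaled_copies: "K = insert 0 (\<Union>m n. (\<lambda>x. p ^ m * (q ^ n * x)) ` A)"
  by (rule set_eqI) (auto simp: mem_K_iff_scaled_copies)

end

locale separated_pq_attractor = pq_attractor +
  assumes separated:
    "\<And>m n a a'. 1 \<le> m \<Longrightarrow> 1 \<le> n \<Longrightarrow> a \<in> A \<Longrightarrow> a' \<in> A \<Longrightarrow> p ^ m * a \<noteq> q ^ n * a'"
begin

sublocale separated_scales p q A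
  using p q A_subset separated by unfold_locales auto

lemma scaled_copies_disjoint:
  assumes "(m, n) \<noteq> (m', n')"
  shows "(\<lambda>x. p ^ m * (q ^ n * x)) ` A \<inter> (\<lambda>x. p ^ m' * (q ^ n' * x)) ` A = {}"
  using scaled_copies_injective assms by blast

lemma zero_notin_scaled_copy: "0 \<notin> (\<lambda>x. p ^ m * (q ^ n * x)) ` A"
  using A_subset p q by auto

lemma scaled_images_inter:
  "(\<lambda>x. p ^ m * x) ` K \<inter> (\<lambda>x. q ^ n * x) ` K = (\<lambda>x. p ^ m * (q ^ n * x)) ` K"
proof (intro equalityI subsetI)
  fix x assume "x \<in> (\<lambda>x. p ^ m * (q ^ n * x)) ` K"
  then obtain y where "y \<in> K" "x = p ^ m * (q ^ n * y)" by blast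
  moreover have "x = q ^ n * (p ^ m * y)" using \<open>x = p ^ m * (q ^ n * y)\<close> by simp
  ultimately show "x \<in> (\<lambda>x. p ^ m * x) ` K \<inter> (\<lambda>x. q ^ n * x) ` K"
    using scaled_mem_K[of y 0 n] scaled_mem_K[of y m 0] by auto
next
  fix x assume "x \<in> (\<lambda>x. p ^ m * x) ` K \<inter> (\<lambda>x. q ^ n * x) ` K"
  then obtain y z where yz: "y \<in> K" "z \<in> K" "x = p ^ m * y" "x = q ^ n * z" by blast
  show "x \<in> (\<lambda>x. p ^ m * (q ^ n * x)) ` K"
  proof (cases "x = 0")
    case True
    then show ?thesis using zero_mem_K by force
  next
    case False
    then have "y \<noteq> 0" "z \<noteq> 0" using yz by auto
    then obtain i j a i' j' a' where "a \<in> A" "y = p ^ i * (q ^ j * a)"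
      and "a' \<in> A" "z = p ^ i' * (q ^ j' * a')"
      using yz(1,2) mem_K_iff_scaled_copies by meson
    moreover from calculation have "p ^ (m + i) * (q ^ j * a) = p ^ i' * (q ^ (n + j') * a')"
      using yz(3,4) by (simp add: power_add ac_simps)
    ultimately have "j = n + j'" "x = p ^ m * y" "a \<in> A" "y = p ^ i * (q ^ j * a)"
      using scaled_copies_injective yz(3) by blast+
    then have "x = p ^ m * (q ^ n * (p ^ i * (q ^ j' * a)))" by (simp add: power_add ac_simps)
    then show ?thesis using scaled_mem_K A_subset_K \<open>a \<in> A\<close> by blast
  qed
qed

end

lemma funpow_scale: "(\<lambda>x. c * x) ^^ n = (\<lambda>x. c ^ n * x)"
  for c :: "'a::monoid_mult"
  using funpow_times_power[where x = c and f = "\<lambda>_. n"] by simp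

theorem proposition2:
  fixes p q :: real and K A :: "real set"
    and S1 S2 S3 S4 :: "real \<Rightarrow> real"
  assumes hp: "0 < p" "p < 1/2" and hq: "0 < q" "q < 1/2"
    and S1_def: "S1 = (\<lambda>x. p * x)"
    and S2_def: "S2 = (\<lambda>x. q * x)"
    and S3_def: "S3 = (\<lambda>x. p * x + 1 - p)"
    and S4_def: "S4 = (\<lambda>x. q * x + 1 - q)"
    and hK: "is_attractor {S1, S2, S3, S4} K"
    and A_def: "A = S3 ` K \<union> S4 ` K"
    and hdisj: "\<And>m n::nat. m \<ge> 1 \<Longrightarrow> n \<ge> 1 \<Longrightarrow> (S1 ^^ m) ` A \<inter> (S2 ^^ n) ` A = {}"
  shows "(K = {0} \<union> (\<Union>m::nat. \<Union>n::nat. (S1 ^^ m) ` (S2 ^^ n) ` A)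
          \<and> (\<forall>m n m' n'::nat. (m, n) \<noteq> (m', n') \<longrightarrow>
                ((S1 ^^ m) ` (S2 ^^ n) ` A) \<inter> ((S1 ^^ m') ` (S2 ^^ n') ` A) = {})
          \<and> (\<forall>m n::nat. 0 \<notin> (S1 ^^ m) ` (S2 ^^ n) ` A))
         \<and> (\<forall>m n::nat. (S1 ^^ m) ` K \<inter> (S2 ^^ n) ` K = (S1 ^^ m) ` (S2 ^^ n) ` K)"
proof -
  have pow: "S1 ^^ m = (\<lambda>x. p ^ m * x)" "S2 ^^ m = (\<lambda>x. q ^ m * x)" for m
    unfolding S1_def S2_def by (rule funpow_scale)+
  interpret K: pq_attractor p q K
    using hp hq hK unfolding S1_def S2_def S3_def S4_def by unfold_locales
  have A_eq: "A = K.A"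
    unfolding A_def K.A_def S3_def S4_def ..
  interpret K: separated_pq_attractor p q K
    using hdisj unfolding pow A_eq by unfold_locales blast
  have copies: "(S1 ^^ m) ` (S2 ^^ n) ` A = (\<lambda>x. p ^ m * (q ^ n * x)) ` A" for m n
    unfolding pow image_image ..
  show ?thesis
    unfolding copies pow image_image A_eq insert_is_Un[symmetric]
    by (intro conjI allI impI K.K_eq_scaled_copies K.scaled_copies_disjoint
        K.zero_notin_scaled_copy K.scaled_images_inter)
qed

end
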